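(* Let $\{x_i\}_{i\in\mathcal N_+}$ and $\{x_j\}_{j\in\mathcal N_-}$ be two finite nonempty families of vectors in $\mathbb R^s$ (indexed by disjoint index sets $\mathcal N_+$, $\mathcal N_-$), and define the centroids $x_p^c=\frac{1}{|\mathcal N_+|}\sum_{i\in\mathcal N_+}x_i$ and $x_n^c=\frac{1}{|\mathcal N_-|}\sum_{j\in\mathcal N_-}x_j$, the class-imbalance ratio $r_c=\frac{|\mathcal N_+|}{|\mathcal N_-|}$, and the scale-class-imbalance ratio $$r_{sc}=r_c\sqrt{\frac{\|x_p^c\|^2+1}{\|x_n^c\|^2+1}}.$$ Assume the mean-zero normalization $\sum_{i\in\mathcal N_+}x_i+\sum_{j\in\mathcal N_-}x_j=0$, and that $x_p^c\neq 0$ and $x_n^c\neq 0$. Then: if $r_{sc}=1$, we have $r_c=1$; and if $r_{sc}\neq 1$, we have $|r_{sc}-1|<|r_c-1|$.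
   Context: $\|\cdot\|$ denotes the Euclidean norm on $\mathbb R^s$ and $|\cdot|$ the cardinality of a finite set. *)

theory Defs
  imports "HOL-Analysis.Analysis"
begin

definition centroid :: "('i \<Rightarrow> real^'s) \<Rightarrow> 'i set \<Rightarrow> real^'s" where
  "centroid x N = (1 / real (card N)) *\<^sub>R (\<Sum>i\<in>N. x i)"

definition class_imb_ratio :: "'i set \<Rightarrow> 'i set \<Rightarrow> real" where
  "class_imb_ratio Np Nn = real (card Np) / real (card Nn)"

definition scale_class_imb_ratio :: "('i \<Rightarrow> real^'s) \<Rightarrow> 'i set \<Rightarrow> 'i set \<Rightarrow> real" where
  "scale_class_imb_ratio x Np Nn =
     class_imb_ratio Np Nn *
     sqrt (((norm (centroid x Np))\<^sup>2 + 1) / ((norm (centroid x Nn))\<^sup>2 + 1))"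

end

theory Submission
  imports Defs
begin

text \<open>
  Mean-zero normalization forces the class sums to be opposite, so both centroids have the same
  norm up to the factors \<open>1/|N\<^sub>+|\<close> and \<open>1/|N\<^sub>-|\<close>. Writing \<open>a\<close> for the norm of the class sum,
  \<open>r\<^sub>s\<^sub>c\<^sup>2 = (a\<^sup>2 + |N\<^sub>+|\<^sup>2) / (a\<^sup>2 + |N\<^sub>-|\<^sup>2)\<close>, a mediant of \<open>r\<^sub>c\<^sup>2\<close> and \<open>1\<close>; hence \<open>r\<^sub>s\<^sub>c\<close>
  lies strictly between \<open>r\<^sub>c\<close> and \<open>1\<close> unless \<open>r\<^sub>c = 1\<close>.
\<close>

lemma mediant_strictly_between:
  fixes c u v :: real
  assumes "c > 0" "u > 0" "v > 0"
  shows "u < v \<Longrightarrow> u / v < (c + u) / (c + v) \<and> (c + u) / (c + v) < 1"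
    and "v < u \<Longrightarrow> 1 < (c + u) / (c + v) \<and> (c + u) / (c + v) < u / v"
  using assms by (auto simp: field_simps)

lemma sqrt_mediant_strictly_between:
  fixes c p n :: real
  assumes "c > 0" "p > 0" "n > 0"
  shows "p < n \<Longrightarrow> p / n < sqrt ((c + p\<^sup>2) / (c + n\<^sup>2)) \<and> sqrt ((c + p\<^sup>2) / (c + n\<^sup>2)) < 1"
    and "n < p \<Longrightarrow> 1 < sqrt ((c + p\<^sup>2) / (c + n\<^sup>2)) \<and> sqrt ((c + p\<^sup>2) / (c + n\<^sup>2)) < p / n"
proof -
  have ratio: "p / n = sqrt (p\<^sup>2 / n\<^sup>2)"
    using assms by (simp add: real_sqrt_divide)
  have "p\<^sup>2 < n\<^sup>2" if "p < n"
    using that assms by (simp add: power_strict_mono)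
  then show "p < n \<Longrightarrow> p / n < sqrt ((c + p\<^sup>2) / (c + n\<^sup>2)) \<and> sqrt ((c + p\<^sup>2) / (c + n\<^sup>2)) < 1"
    unfolding ratio using mediant_strictly_between(1)[of c "p\<^sup>2" "n\<^sup>2"] assms by simp
  have "n\<^sup>2 < p\<^sup>2" if "n < p"
    using that assms by (simp add: power_strict_mono)
  then show "n < p \<Longrightarrow> 1 < sqrt ((c + p\<^sup>2) / (c + n\<^sup>2)) \<and> sqrt ((c + p\<^sup>2) / (c + n\<^sup>2)) < p / n"
    unfolding ratio using mediant_strictly_between(2)[of c "p\<^sup>2" "n\<^sup>2"] assms by simp
qed

lemma norm_centroid:
  assumes "finite N" "N \<noteq> {}"
  shows "norm (centroid x N) = norm (\<Sum>i\<in>N. x i) / real (card N)"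
  using assms by (simp add: centroid_def)

lemma scale_class_imb_ratio_mean_zero:
  assumes "finite Np" "finite Nn" "Np \<noteq> {}" "Nn \<noteq> {}"
    and "(\<Sum>i\<in>Np. x i) + (\<Sum>j\<in>Nn. x j) = 0"
  shows "scale_class_imb_ratio x Np Nn =
           sqrt (((norm (\<Sum>i\<in>Np. x i))\<^sup>2 + (real (card Np))\<^sup>2) /
                 ((norm (\<Sum>i\<in>Np. x i))\<^sup>2 + (real (card Nn))\<^sup>2))"
proof -
  define a where "a = norm (\<Sum>i\<in>Np. x i)"
  define p where "p = real (card Np)"
  define n where "n = real (card Nn)"
  have "p > 0" "n > 0"
    using assms by (simp_all add: p_def n_def card_gt_0_iff)
  have "(\<Sum>j\<in>Nn. x j) = - (\<Sum>i\<in>Np. x i)"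
    using assms(5) by (simp add: eq_neg_iff_add_eq_0 add.commute)
  then have "norm (centroid x Np) = a / p" "norm (centroid x Nn) = a / n"
    using assms by (simp_all add: norm_centroid a_def p_def n_def)
  then have "scale_class_imb_ratio x Np Nn = p / n * sqrt (((a / p)\<^sup>2 + 1) / ((a / n)\<^sup>2 + 1))"
    by (simp add: scale_class_imb_ratio_def class_imb_ratio_def p_def n_def)
  also have "((a / p)\<^sup>2 + 1) / ((a / n)\<^sup>2 + 1) = (n / p)\<^sup>2 * ((a\<^sup>2 + p\<^sup>2) / (a\<^sup>2 + n\<^sup>2))"
    using \<open>p > 0\<close> \<open>n > 0\<close> by (simp add: field_simps power2_eq_square)
  also have "p / n * sqrt \<dots> = sqrt ((a\<^sup>2 + p\<^sup>2) / (a\<^sup>2 + n\<^sup>2))"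
    using \<open>p > 0\<close> \<open>n > 0\<close> by (subst real_sqrt_mult) simp
  finally show ?thesis
    by (simp add: a_def p_def n_def)
qed

theorem theorem1:
  fixes x :: "'i \<Rightarrow> real^'s" and Np Nn :: "'i set"
  assumes "finite Np" "finite Nn" "Np \<noteq> {}" "Nn \<noteq> {}" "Np \<inter> Nn = {}"
    and "(\<Sum>i\<in>Np. x i) + (\<Sum>j\<in>Nn. x j) = 0"
    and "centroid x Np \<noteq> 0" "centroid x Nn \<noteq> 0"
  shows "(scale_class_imb_ratio x Np Nn = 1 \<longrightarrow> class_imb_ratio Np Nn = 1) \<and>
         (scale_class_imb_ratio x Np Nn \<noteq> 1 \<longrightarrow>
            \<bar>scale_class_imb_ratio x Np Nn - 1\<bar> < \<bar>class_imb_ratio Np Nn - 1\<bar>)"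
proof -
  define c where "c = (norm (\<Sum>i\<in>Np. x i))\<^sup>2"
  define p where "p = real (card Np)"
  define n where "n = real (card Nn)"
  have "p > 0" "n > 0"
    using assms by (simp_all add: p_def n_def card_gt_0_iff)
  have "c > 0"
    using assms(7) by (auto simp: c_def centroid_def)
  have rsc: "scale_class_imb_ratio x Np Nn = sqrt ((c + p\<^sup>2) / (c + n\<^sup>2))"
    using scale_class_imb_ratio_mean_zero[OF assms(1-4,6)] by (simp add: c_def p_def n_def)
  have rc: "class_imb_ratio Np Nn = p / n"
    by (simp add: class_imb_ratio_def p_def n_def)
  consider "p < n" | "p = n" | "n < p"
    by linarith
  then show ?thesis
    unfolding rsc rc
    using sqrt_mediant_strictly_between[OF \<open>c > 0\<close> \<open>p > 0\<close> \<open>n > 0\<close>] \<open>c > 0\<close> \<open>n > 0\<close>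
    by cases (auto simp: add_nonneg_eq_0_iff)
qed

end
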